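(* Let $G=(V,E,\mathcal{W})$ be a coherent matrix-weighted network as described in the context, and consider the consensus dynamics $\dot{\mathbf{y}}_i=\sum_j w_{ij}(\mathbf{R}_{ij}\mathbf{y}_j-\mathbf{y}_i)$, $i=1,\dots,n$, i.e. $\dot{\mathbf{y}}=-\mathcal{L}\mathbf{y}$ for $\mathbf{y}=(\mathbf{y}_1;\dots;\mathbf{y}_n)$, $\mathbf{y}_i\in\mathbb{R}^{n_d}$, with initial states $\mathbf{y}_i(0)$. Then for each node $v_j$, $\mathbf{y}_j(t)\to\mathbf{y}_j^*$ as $t\to\infty$, where $$\mathbf{y}_j^*=\mathbf{S}_{\sigma(j)1}\,\bar{\mathbf{y}}(0)/n,\qquad \bar{\mathbf{y}}(0)=\sum_{i=1}^n\mathbf{S}_{1\sigma(i)}\mathbf{y}_i(0).$$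
   Context: A matrix-weighted network (MWN) is $G=(V,E,\mathcal{W})$ with node set $V=\{v_1,\dots,v_n\}$ and edge set $E\subset V\times V$, whose underlying graph is connected. For a fixed dimension $n_d$, each ordered pair $(i,j)$ carries $\mathbf{W}_{ij}\in\mathbb{R}^{n_d\times n_d}$, with $\mathbf{W}_{ij}=0$ iff $(v_i,v_j)\notin E$, and $\mathbf{W}_{ij}=\mathbf{W}_{ji}^T$. Write $w_{ij}=\|\mathbf{W}_{ij}\|_2$ and, for edges, $\mathbf{R}_{ij}=\mathbf{W}_{ij}/w_{ij}$ (transformation of the edge; take the term to be zero when $w_{ij}=0$). $\mathcal{W}$ is the $nn_d\times nn_d$ block matrix with blocks $\mathbf{W}_{ij}$; $d_i=\sum_j w_{ij}$, $\mathcal{D}=\mathrm{diag}(d_i)\otimes\mathbf{I}$ ($\mathbf{I}$ the $n_d\times n_d$ identity), $\mathcal{L}=\mathcal{D}-\mathcal{W}$. The transformation of a directed path or cycle with consecutive edges $e_1,\dots,e_k$ is $\mathbf{R}(e_1)\cdots\mathbf{R}(e_k)$; $G$ is coherent if every directed cycle $(v_{i_1},v_{i_2}),\dots,(v_{i_l},v_{i_1})$ ($l\ge2$, distinct nodes) has transformation $\mathbf{I}$. For coherent $G$ there is a partition $\{V_1,\dots,V_{l_p}\}$ of $V$ such that edges inside a part have transformation $\mathbf{I}$, all edges from a part $V_a$ to a part $V_b$ share the same transformation, and every directed cycle of parts (as super nodes) has transformation $\mathbf{I}$. For such a partition, $\sigma(i)$ is the index of the part containing $v_i$, and $\mathbf{S}_{hl}$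 is the transformation of a directed path from a node of $V_h$ to a node of $V_l$. *)

theory Defs
  imports "HOL-Analysis.Analysis"
begin

text \<open>Nodes are indexed 1..n, parts 1..lp. A matrix-weighted network is given by
  the block function W :: nat => nat => real^'d^'d (dimension n_d = CARD('d)).
  The pair (i,j) is an edge iff W i j is nonzero.\<close>

definition wgt :: "(nat \<Rightarrow> nat \<Rightarrow> real^'d^'d) \<Rightarrow> nat \<Rightarrow> nat \<Rightarrow> real" where
  "wgt W i j = onorm (\<lambda>x. W i j *v x)"

definition trf :: "(nat \<Rightarrow> nat \<Rightarrow> real^'d^'d) \<Rightarrow> nat \<Rightarrow> nat \<Rightarrow> real^'d^'d" where
  "trf W i j = (if wgt W i j = 0 then 0 else scaleR (1 / wgt W i j) (W i j))"

fun path_trf :: "(nat \<Rightarrow> nat \<Rightarrow> real^'d^'d) \<Rightarrow> nat list \<Rightarrow> real^'d^'d" where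
  "path_trf W (i # j # rest) = trf W i j ** path_trf W (j # rest)"
| "path_trf W _ = mat 1"

definition edges_trf :: "(nat \<Rightarrow> nat \<Rightarrow> real^'d^'d) \<Rightarrow> (nat \<times> nat) list \<Rightarrow> real^'d^'d" where
  "edges_trf W es = foldr (\<lambda>(u,v) M. trf W u v ** M) es (mat 1)"

definition is_path :: "nat \<Rightarrow> (nat \<Rightarrow> nat \<Rightarrow> real^'d^'d) \<Rightarrow> nat list \<Rightarrow> bool" where
  "is_path n W ps \<longleftrightarrow> ps \<noteq> [] \<and> distinct ps \<and> set ps \<subseteq> {1..n} \<and>
     (\<forall>k < length ps - 1. W (ps ! k) (ps ! Suc k) \<noteq> 0)"

definition mwn :: "nat \<Rightarrow> (nat \<Rightarrow> nat \<Rightarrow> real^'d^'d) \<Rightarrow> bool" where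
  "mwn n W \<longleftrightarrow>
     (\<forall>i j. W i j = transpose (W j i)) \<and>
     (\<forall>i j. i \<notin> {1..n} \<or> j \<notin> {1..n} \<longrightarrow> W i j = 0) \<and>
     (\<forall>i. W i i = 0) \<and>
     (\<forall>i\<in>{1..n}. \<forall>j\<in>{1..n}. (i, j) \<in> {(a, b). W a b \<noteq> 0}\<^sup>*)"

definition coherent :: "nat \<Rightarrow> (nat \<Rightarrow> nat \<Rightarrow> real^'d^'d) \<Rightarrow> bool" where
  "coherent n W \<longleftrightarrow>
     (\<forall>ps. is_path n W ps \<and> length ps \<ge> 2 \<and> W (last ps) (hd ps) \<noteq> 0
        \<longrightarrow> path_trf W (ps @ [hd ps]) = mat 1)"

text \<open>A partition of the nodes into parts 1..lp (sigma i = index of the part of node i)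
  with the three properties from the paper.\<close>
definition coherent_partition ::
  "nat \<Rightarrow> (nat \<Rightarrow> nat \<Rightarrow> real^'d^'d) \<Rightarrow> nat \<Rightarrow> (nat \<Rightarrow> nat) \<Rightarrow> bool" where
  "coherent_partition n W lp \<sigma> \<longleftrightarrow>
     \<sigma> ` {1..n} = {1..lp} \<and>
     (\<forall>i\<in>{1..n}. \<forall>j\<in>{1..n}. W i j \<noteq> 0 \<and> \<sigma> i = \<sigma> j \<longrightarrow> trf W i j = mat 1) \<and>
     (\<forall>i\<in>{1..n}. \<forall>j\<in>{1..n}. \<forall>k\<in>{1..n}. \<forall>l\<in>{1..n}.
        W i j \<noteq> 0 \<and> W k l \<noteq> 0 \<and> \<sigma> i = \<sigma> k \<and> \<sigma> j = \<sigma> l \<longrightarrow> trf W i j = trf W k l) \<and>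
     (\<forall>as es. distinct as \<and> set as \<subseteq> {1..lp} \<and> length as \<ge> 2 \<and> length es = length as \<and>
        (\<forall>k < length as. fst (es ! k) \<in> {1..n} \<and> snd (es ! k) \<in> {1..n} \<and>
           W (fst (es ! k)) (snd (es ! k)) \<noteq> 0 \<and>
           \<sigma> (fst (es ! k)) = as ! k \<and>
           \<sigma> (snd (es ! k)) = as ! (Suc k mod length as))
        \<longrightarrow> edges_trf W es = mat 1)"

definition part_trf ::
  "nat \<Rightarrow> (nat \<Rightarrow> nat \<Rightarrow> real^'d^'d) \<Rightarrow> nat \<Rightarrow> (nat \<Rightarrow> nat) \<Rightarrow> (nat \<Rightarrow> nat \<Rightarrow> real^'d^'d) \<Rightarrow> bool" where
  "part_trf n W lp \<sigma> S \<longleftrightarrow>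
     (\<forall>h\<in>{1..lp}. \<forall>l\<in>{1..lp}. \<forall>ps. is_path n W ps \<and> \<sigma> (hd ps) = h \<and> \<sigma> (last ps) = l
        \<longrightarrow> path_trf W ps = S h l)"

end

(*
  Coherence makes the transformation of every closed walk the identity: a closed walk that is
  not a simple cycle splits at a repeated node into two shorter closed walks. Hence, fixing a
  node of part 1, the matrices T k = S 1 (sigma k) satisfy T i R_ij = T j along every edge and are
  inverted by S (sigma k) 1. The gauge change z_k = T k y_k turns the dynamics into scalar-weighted
  consensus z_i' = sum_j w_ij (z_j - z_i), with symmetric weights because the spectral norm is
  invariant under transposition. There the sum of the z_k is conserved, and the spread
  V = sum_k |z_k - mean|^2 satisfies V' = -sum_ij w_ij |z_j - z_i|^2 <= -V/K, the last step being a
  Poincare-type inequality that holds because the graph is connected. So V decays exponentially,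
  every z_k tends to the mean of z(0), and y_k = S (sigma k) 1 z_k tends to the claimed limit.
*)
theory Submission
  imports Defs "HOL-Library.Transitive_Closure_Table"
begin

section \<open>Spectral norm of the edge weights\<close>

lemma onorm_transpose_le:
  fixes A :: "real^'n^'m"
  shows "onorm (\<lambda>x. transpose A *v x) \<le> onorm (\<lambda>x. A *v x)"
proof (rule onorm_le)
  fix x :: "real^'m"
  let ?u = "transpose A *v x"
  have "(norm ?u)\<^sup>2 = x \<bullet> (A *v ?u)"
    by (simp add: power2_norm_eq_inner flip: dot_lmul_matrix)
  also have "\<dots> \<le> norm x * norm (A *v ?u)"
    by (rule norm_cauchy_schwarz)
  also have "\<dots> \<le> norm x * (onorm (\<lambda>x. A *v x) * norm ?u)"
    by (intro mult_left_mono onorm[OF matrix_vector_mul_bounded_linear]) simp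
  finally have "norm ?u * norm ?u \<le> (onorm (\<lambda>x. A *v x) * norm x) * norm ?u"
    by (simp add: power2_eq_square ac_simps)
  then show "norm ?u \<le> onorm (\<lambda>x. A *v x) * norm x"
    by (cases "norm ?u = 0") (auto simp: onorm_pos_le[OF matrix_vector_mul_bounded_linear])
qed

lemma onorm_transpose:
  fixes A :: "real^'n^'m"
  shows "onorm (\<lambda>x. transpose A *v x) = onorm (\<lambda>x. A *v x)"
  using onorm_transpose_le[of A] onorm_transpose_le[of "transpose A"] by simp

lemma wgt_nonneg: "0 \<le> wgt W i j"
  unfolding wgt_def by (rule onorm_pos_le[OF matrix_vector_mul_bounded_linear])

lemma wgt_pos_iff: "0 < wgt W i j \<longleftrightarrow> W i j \<noteq> 0"
  unfolding wgt_def onorm_pos_lt[OF matrix_vector_mul_bounded_linear]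
  by (simp add: matrix_eq)

lemma wgt_eq_0_iff: "wgt W i j = 0 \<longleftrightarrow> W i j = 0"
  using wgt_nonneg[of W i j] wgt_pos_iff[of W i j] by linarith

section \<open>Consensus with symmetric scalar weights\<close>

lemma deriv_le_imp_exp_decay:
  fixes V V' :: "real \<Rightarrow> real"
  assumes deriv: "\<And>t. 0 \<le> t \<Longrightarrow> (V has_real_derivative V' t) (at t within {0..})"
    and decay: "\<And>t. 0 \<le> t \<Longrightarrow> V' t \<le> - c * V t"
    and t: "0 \<le> t"
  shows "V t \<le> V 0 * exp (- c * t)"
proof -
  define g where "g s = V s * exp (c * s)" for s
  define g' where "g' s = (V' s + c * V s) * exp (c * s)" for s
  have "(g has_real_derivative g' s) (at s within {0..t})" if "0 \<le> s" for s
    unfolding g_def g'_def using DERIV_subset[OF deriv[OF that], of "{0..t}"]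
    by (auto intro!: derivative_eq_intros simp: algebra_simps)
  then obtain s where s: "s \<in> {0..t}" "g t - g 0 = g' s * t"
    using mvt_very_simple[OF t, of g "\<lambda>s. (*) (g' s)"] by (auto simp: has_field_derivative_def)
  have "g' s * t \<le> 0"
    using decay[of s] s t unfolding g'_def by (intro mult_nonpos_nonneg) auto
  then have "V t * exp (c * t) \<le> V 0"
    using s unfolding g_def by simp
  then show ?thesis
    by (simp add: exp_minus field_simps)
qed

locale symmetric_consensus =
  fixes I :: "'i set" and a :: "'i \<Rightarrow> 'i \<Rightarrow> real"
  assumes finite_I: "finite I"
    and weight_nonneg: "0 \<le> a i j"
    and weight_sym: "a i j = a j i"
    and support_connected: "i \<in> I \<Longrightarrow> j \<in> I \<Longrightarrow> (i, j) \<in> {(u, v). u \<in> I \<and> v \<in> I \<and> 0 < a u v}\<^sup>*"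
begin

definition consensus_field :: "('i \<Rightarrow> 'v::real_vector) \<Rightarrow> 'i \<Rightarrow> 'v" where
  "consensus_field x i = (\<Sum>j\<in>I. a i j *\<^sub>R (x j - x i))"

definition disagreement :: "('i \<Rightarrow> 'v::real_normed_vector) \<Rightarrow> real" where
  "disagreement x = (\<Sum>i\<in>I. \<Sum>j\<in>I. a i j * (norm (x j - x i))\<^sup>2)"

definition average :: "('i \<Rightarrow> 'v::real_vector) \<Rightarrow> 'v" where
  "average x = (1 / real (card I)) *\<^sub>R (\<Sum>i\<in>I. x i)"

definition spread :: "('i \<Rightarrow> 'v::real_normed_vector) \<Rightarrow> real" where
  "spread x = (\<Sum>i\<in>I. (norm (x i - average x))\<^sup>2)"

lemma sum_consensus_field: "(\<Sum>i\<in>I. consensus_field x i) = 0"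
proof -
  have "(\<Sum>i\<in>I. \<Sum>j\<in>I. a i j *\<^sub>R x j) = (\<Sum>i\<in>I. \<Sum>j\<in>I. a i j *\<^sub>R x i)"
    by (subst sum.swap) (simp add: weight_sym)
  then show ?thesis
    unfolding consensus_field_def by (simp add: scaleR_diff_right sum_subtractf)
qed

lemma inner_consensus_field:
  fixes x :: "'i \<Rightarrow> 'v::real_inner"
  shows "2 * (\<Sum>i\<in>I. (x i - m) \<bullet> consensus_field x i) = - disagreement x"
proof -
  define X where "X = (\<Sum>i\<in>I. \<Sum>j\<in>I. a i j * ((x i - m) \<bullet> (x j - x i)))"
  have "X = (\<Sum>i\<in>I. \<Sum>j\<in>I. a i j * ((x j - m) \<bullet> (x i - x j)))"
    unfolding X_def by (subst sum.swap) (simp add: weight_sym)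
  then have "2 * X = (\<Sum>i\<in>I. \<Sum>j\<in>I. a i j * ((x i - m) \<bullet> (x j - x i) + (x j - m) \<bullet> (x i - x j)))"
    unfolding X_def by (simp add: sum.distrib distrib_left)
  also have "\<dots> = (\<Sum>i\<in>I. \<Sum>j\<in>I. - (a i j * (norm (x j - x i))\<^sup>2))"
    by (intro sum.cong refl)
      (simp add: power2_norm_eq_inner inner_diff_left inner_diff_right inner_commute algebra_simps)
  also have "\<dots> = - disagreement x"
    by (simp add: disagreement_def sum_negf)
  finally show ?thesis
    unfolding X_def consensus_field_def by (simp add: inner_sum_right)
qed

lemma disagreement_nonneg: "0 \<le> disagreement x"
  unfolding disagreement_def by (intro sum_nonneg mult_nonneg_nonneg weight_nonneg) auto

lemma weighted_diff_le_disagreement: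
  assumes "i \<in> I" "j \<in> I"
  shows "a i j * (norm (x j - x i))\<^sup>2 \<le> disagreement x"
proof -
  have "a i j * (norm (x j - x i))\<^sup>2 \<le> (\<Sum>j\<in>I. a i j * (norm (x j - x i))\<^sup>2)"
    using assms finite_I weight_nonneg by (intro member_le_sum) auto
  also have "\<dots> \<le> disagreement x"
    unfolding disagreement_def using assms finite_I weight_nonneg
    by (intro member_le_sum[where f = "\<lambda>i. \<Sum>j\<in>I. a i j * (norm (x j - x i))\<^sup>2"] sum_nonneg) auto
  finally show ?thesis .
qed

lemma reachable_diff_le:
  assumes "(i, j) \<in> {(u, v). u \<in> I \<and> v \<in> I \<and> 0 < a u v}\<^sup>*"
  shows "\<exists>c. \<forall>x :: 'i \<Rightarrow> 'v::real_normed_vector. norm (x j - x i) \<le> c * sqrt (disagreement x)"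
  using assms
proof (induction rule: rtrancl_induct)
  case base
  show ?case
    by (intro exI[of _ 0]) simp
next
  case (step j k)
  then obtain c where c: "\<And>x :: 'i \<Rightarrow> 'v. norm (x j - x i) \<le> c * sqrt (disagreement x)"
    by blast
  have jk: "j \<in> I" "k \<in> I" "0 < a j k"
    using step.hyps(2) by auto
  have "norm (x k - x i) \<le> (c + 1 / sqrt (a j k)) * sqrt (disagreement x)" for x :: "'i \<Rightarrow> 'v"
  proof -
    have "(norm (x k - x j))\<^sup>2 \<le> disagreement x / a j k"
      using weighted_diff_le_disagreement[OF jk(1,2), of x] jk(3) by (simp add: field_simps)
    then have "norm (x k - x j) \<le> sqrt (disagreement x) / sqrt (a j k)"
      by (simp add: real_le_rsqrt flip: real_sqrt_divide)
    moreover have "norm (x k - x i) \<le> norm (x k - x j) + norm (x j - x i)"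
      using norm_triangle_ineq[of "x k - x j" "x j - x i"] by simp
    ultimately show ?thesis
      using c[of x] by (simp add: algebra_simps)
  qed
  then show ?case by blast
qed

lemma norm_diff_average_le:
  assumes i: "i \<in> I" and b: "\<And>j. j \<in> I \<Longrightarrow> norm (x i - x j) \<le> b"
  shows "norm (x i - average x) \<le> b"
proof -
  have card: "0 < real (card I)"
    using i finite_I card_gt_0_iff by auto
  have "x i - average x = (1 / real (card I)) *\<^sub>R (\<Sum>j\<in>I. x i - x j)"
    using card by (simp add: average_def sum_subtractf scaleR_diff_right sum_constant_scaleR)
  then have "norm (x i - average x) \<le> (\<Sum>j\<in>I. norm (x i - x j)) / real (card I)"
    using card by (simp add: norm_sum divide_right_mono)
  also have "\<dots> \<le> b"
    using card b sum_bounded_above[of I "\<lambda>j. norm (x i - x j)" b]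
    by (simp add: pos_divide_le_eq mult.commute)
  finally show ?thesis .
qed

lemma diff_le_disagreement:
  "\<exists>C. \<forall>x :: 'i \<Rightarrow> 'v::real_normed_vector. \<forall>i\<in>I. \<forall>j\<in>I.
      norm (x j - x i) \<le> C * sqrt (disagreement x)"
proof -
  have "\<forall>i\<in>I. \<forall>j\<in>I. \<exists>c. \<forall>x :: 'i \<Rightarrow> 'v. norm (x j - x i) \<le> c * sqrt (disagreement x)"
    using reachable_diff_le support_connected by blast
  then obtain c where c: "\<And>i j x :: 'i \<Rightarrow> 'v. i \<in> I \<Longrightarrow> j \<in> I \<Longrightarrow>
      norm (x j - x i) \<le> c i j * sqrt (disagreement x)"
    by metis
  define C where "C = (\<Sum>i\<in>I. \<Sum>j\<in>I. \<bar>c i j\<bar>)"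
  have "norm (x j - x i) \<le> C * sqrt (disagreement x)"
    if "i \<in> I" "j \<in> I" for i j and x :: "'i \<Rightarrow> 'v"
  proof -
    have "\<bar>c i j\<bar> \<le> (\<Sum>j\<in>I. \<bar>c i j\<bar>)"
      using that finite_I by (intro member_le_sum) auto
    then have "c i j \<le> (\<Sum>j\<in>I. \<bar>c i j\<bar>)"
      by linarith
    also have "\<dots> \<le> C"
      unfolding C_def using that finite_I
      by (intro member_le_sum[where f = "\<lambda>i. \<Sum>j\<in>I. \<bar>c i j\<bar>"] sum_nonneg) auto
    finally have "c i j * sqrt (disagreement x) \<le> C * sqrt (disagreement x)"
      by (intro mult_right_mono) (simp_all add: disagreement_nonneg)
    then show ?thesis
      using c[OF that, of x] by linarith
  qed
  then show ?thesis
    by blast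
qed

lemma spread_le_disagreement:
  "\<exists>K>0. \<forall>x :: 'i \<Rightarrow> 'v::real_normed_vector. spread x \<le> K * disagreement x"
proof -
  obtain C where C: "\<And>x :: 'i \<Rightarrow> 'v. \<And>i j. i \<in> I \<Longrightarrow> j \<in> I \<Longrightarrow>
      norm (x j - x i) \<le> C * sqrt (disagreement x)"
    using diff_le_disagreement by blast
  have "spread x \<le> (real (card I) * C\<^sup>2 + 1) * disagreement x" for x :: "'i \<Rightarrow> 'v"
  proof -
    have pointwise: "(norm (x i - average x))\<^sup>2 \<le> C\<^sup>2 * disagreement x" if "i \<in> I" for i
    proof -
      have "norm (x i - average x) \<le> C * sqrt (disagreement x)"
        using that C by (intro norm_diff_average_le) (auto simp: norm_minus_commute)
      then have "(norm (x i - average x))\<^sup>2 \<le> (C * sqrt (disagreement x))\<^sup>2"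
        by (intro power_mono) auto
      then show ?thesis
        by (simp add: power_mult_distrib disagreement_nonneg)
    qed
    then have "spread x \<le> real (card I) * (C\<^sup>2 * disagreement x)"
      using sum_bounded_above[of I "\<lambda>i. (norm (x i - average x))\<^sup>2"] unfolding spread_def by simp
    also have "\<dots> \<le> (real (card I) * C\<^sup>2 + 1) * disagreement x"
      using disagreement_nonneg[of x] by (simp add: algebra_simps)
    finally show ?thesis .
  qed
  moreover have "0 < real (card I) * C\<^sup>2 + 1"
    by (simp add: add_nonneg_pos)
  ultimately show ?thesis
    by blast
qed

context
  fixes z :: "real \<Rightarrow> 'i \<Rightarrow> 'v::real_inner"
  assumes consensus_ode: "\<And>t i. 0 \<le> t \<Longrightarrow> i \<in> I \<Longrightarrow>
    ((\<lambda>s. z s i) has_vector_derivative consensus_field (z t) i) (at t within {0..})"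
begin

lemma average_constant:
  assumes "0 \<le> t"
  shows "average (z t) = average (z 0)"
proof -
  have "((\<lambda>s. \<Sum>i\<in>I. z s i) has_vector_derivative 0) (at s within {0..})" if "s \<in> {0..}" for s
  proof -
    have "((\<lambda>s. \<Sum>i\<in>I. z s i) has_vector_derivative (\<Sum>i\<in>I. consensus_field (z s) i))
        (at s within {0..})"
      using consensus_ode that by (intro has_vector_derivative_sum) auto
    then show ?thesis
      by (simp add: sum_consensus_field)
  qed
  then obtain c where "\<And>s. s \<in> {0..} \<Longrightarrow> (\<Sum>i\<in>I. z s i) = c"
    using has_vector_derivative_zero_constant[of "{0::real..}"] by (auto simp: convex_real_interval)
  then show ?thesis
    using assms by (simp add: average_def)
qed

lemma spread_exp_decay: "\<exists>c>0. \<forall>t\<ge>0. spread (z t) \<le> spread (z 0) * exp (- c * t)"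
proof -
  obtain K where K: "0 < K" "\<And>x :: 'i \<Rightarrow> 'v. spread x \<le> K * disagreement x"
    using spread_le_disagreement by blast
  define m where "m = average (z 0)"
  define V where "V s = (\<Sum>i\<in>I. (z s i - m) \<bullet> (z s i - m))" for s
  have V_spread: "V t = spread (z t)" if "0 \<le> t" for t
    unfolding V_def spread_def m_def average_constant[OF that] by (simp add: power2_norm_eq_inner)
  have "(V has_real_derivative - disagreement (z t)) (at t within {0..})" if "0 \<le> t" for t
  proof -
    have "(V has_vector_derivative
        (\<Sum>i\<in>I. (z t i - m) \<bullet> consensus_field (z t) i + consensus_field (z t) i \<bullet> (z t i - m)))
        (at t within {0..})"
      unfolding V_def using consensus_ode[OF that]
      by (intro has_vector_derivative_sum bounded_bilinear.has_vector_derivative[OF bounded_bilinear_inner])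
        (auto simp: has_vector_derivative_diff_const)
    moreover have "(\<Sum>i\<in>I. (z t i - m) \<bullet> consensus_field (z t) i + consensus_field (z t) i \<bullet> (z t i - m))
        = - disagreement (z t)"
      using inner_consensus_field[of "z t" m] by (simp add: inner_commute sum_distrib_left)
    ultimately show ?thesis
      by (simp add: has_real_derivative_iff_has_vector_derivative)
  qed
  moreover have "- disagreement (z t) \<le> - (1 / K) * V t" if "0 \<le> t" for t
    using K(2)[of "z t"] K(1) V_spread[OF that] by (simp add: field_simps)
  ultimately have "V t \<le> V 0 * exp (- (1 / K) * t)" if "0 \<le> t" for t
    using that by (rule deriv_le_imp_exp_decay)
  then show ?thesis
    using K(1) V_spread by (intro exI[of _ "1 / K"]) auto
qed

theorem consensus_tendsto_average:
  assumes i: "i \<in> I"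
  shows "((\<lambda>t. z t i) \<longlongrightarrow> average (z 0)) at_top"
proof -
  obtain c where c: "0 < c" "\<And>t. 0 \<le> t \<Longrightarrow> spread (z t) \<le> spread (z 0) * exp (- c * t)"
    using spread_exp_decay by blast
  have bound: "(norm (z t i - average (z 0)))\<^sup>2 \<le> spread (z 0) * exp (- c * t)" if "0 \<le> t" for t
  proof -
    have "(norm (z t i - average (z t)))\<^sup>2 \<le> spread (z t)"
      unfolding spread_def using i finite_I by (intro member_le_sum) auto
    then show ?thesis
      using c(2)[OF that] average_constant[OF that] by simp
  qed
  have lim: "((\<lambda>t. spread (z 0) * exp (- c * t)) \<longlongrightarrow> 0) at_top"
  proof -
    have "filterlim (\<lambda>t. - c * t) at_bot at_top"
      using c(1) by (intro filterlim_tendsto_neg_mult_at_bot[OF tendsto_const _ filterlim_ident]) simp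
    then have "((\<lambda>t. exp (- c * t)) \<longlongrightarrow> 0) at_top"
      by (rule filterlim_compose[OF exp_at_bot])
    then show ?thesis
      by (rule tendsto_mult_right_zero)
  qed
  have "((\<lambda>t. (norm (z t i - average (z 0)))\<^sup>2) \<longlongrightarrow> 0) at_top"
  proof (rule tendsto_sandwich[OF _ _ tendsto_const lim])
    show "\<forall>\<^sub>F t in at_top. (norm (z t i - average (z 0)))\<^sup>2 \<le> spread (z 0) * exp (- c * t)"
      using bound eventually_at_top_linorder by blast
  qed simp
  then show ?thesis
    by (simp add: tendsto_norm_zero_iff LIM_zero_iff)
qed

end

end

section \<open>Walks and their transformations\<close>

lemma path_trf_append:
  "path_trf W (p @ x # q) = path_trf W (p @ [x]) ** path_trf W (x # q)"
proof (induction p)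
  case (Cons a p)
  then show ?case by (cases p) (auto simp: matrix_mul_assoc)
qed simp

lemma path_trf_snoc:
  "path_trf W (p @ [x, y]) = path_trf W (p @ [x]) ** trf W x y"
  using path_trf_append[of W p x "[y]"] by simp

abbreviation walk :: "(nat \<Rightarrow> nat \<Rightarrow> 'a::zero) \<Rightarrow> nat list \<Rightarrow> bool" where
  "walk W \<equiv> successively (\<lambda>i j. W i j \<noteq> 0)"

lemma successively_append_Cons_iff:
  "successively P (xs @ x # ys) \<longleftrightarrow> successively P (xs @ [x]) \<and> successively P (x # ys)"
  by (auto simp: successively_append_iff)

lemma is_path_iff:
  "is_path n W p \<longleftrightarrow> p \<noteq> [] \<and> distinct p \<and> set p \<subseteq> {1..n} \<and> walk W p"
  unfolding is_path_def successively_conv_nth by (auto simp: less_diff_conv)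

lemma walk_of_rtrancl_path:
  "rtrancl_path (\<lambda>i j. W i j \<noteq> 0) x xs y \<Longrightarrow> walk W (x # xs) \<and> last (x # xs) = y"
  by (induction rule: rtrancl_path.induct) (auto simp: successively_Cons)

lemma has_vector_derivative_gauge:
  fixes T :: "nat \<Rightarrow> real^'d^'d"
  assumes gauge: "\<And>j. W i j \<noteq> 0 \<Longrightarrow> T i ** trf W i j = T j"
    and y: "((\<lambda>s. y s i) has_vector_derivative
      (\<Sum>j\<in>J. wgt W i j *\<^sub>R (trf W i j *v y t j - y t i))) F"
  shows "((\<lambda>s. T i *v y s i) has_vector_derivative
      (\<Sum>j\<in>J. wgt W i j *\<^sub>R (T j *v y t j - T i *v y t i))) F"
proof -
  have termwise: "T i *v (wgt W i j *\<^sub>R (trf W i j *v y t j - y t i))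
      = wgt W i j *\<^sub>R (T j *v y t j - T i *v y t i)" for j
  proof (cases "W i j = 0")
    case True
    then have "wgt W i j = 0"
      by (simp add: wgt_eq_0_iff)
    then show ?thesis by simp
  next
    case False
    then show ?thesis
      using gauge[OF False]
      by (simp add: matrix_vector_mul_assoc matrix_vector_mult_scaleR matrix_vector_mult_diff_distrib)
  qed
  then show ?thesis
    using bounded_linear.has_vector_derivative[OF matrix_vector_mul_bounded_linear[of "T i"] y]
    by (simp add: vec.sum termwise)
qed

section \<open>Coherent matrix-weighted networks\<close>

locale matrix_weighted_network =
  fixes n :: nat and W :: "nat \<Rightarrow> nat \<Rightarrow> real^'d^'d"
  assumes mwn: "mwn n W"
begin

lemma W_transpose: "W i j = transpose (W j i)"
  using mwn unfolding mwn_def by blast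

lemma adjacent_in_range: "W i j \<noteq> 0 \<Longrightarrow> i \<in> {1..n} \<and> j \<in> {1..n}"
  using mwn unfolding mwn_def by blast

lemma no_loops: "W i i = 0"
  using mwn unfolding mwn_def by blast

lemma adjacency_connected: "i \<in> {1..n} \<Longrightarrow> j \<in> {1..n} \<Longrightarrow> (i, j) \<in> {(a, b). W a b \<noteq> 0}\<^sup>*"
  using mwn unfolding mwn_def by blast

lemma adjacent_sym: "W i j \<noteq> 0 \<Longrightarrow> W j i \<noteq> 0"
  using W_transpose[of i j] by (auto simp: transpose_def vec_eq_iff)

lemma wgt_sym: "wgt W i j = wgt W j i"
  unfolding wgt_def W_transpose[of i j] by (rule onorm_transpose)

sublocale symmetric_consensus "{1..n}" "wgt W"
proof
  have "{(u, v). u \<in> {1..n} \<and> v \<in> {1..n} \<and> 0 < wgt W u v} = {(a, b). W a b \<noteq> 0}"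
    using adjacent_in_range by (auto simp: wgt_pos_iff)
  then show "i \<in> {1..n} \<Longrightarrow> j \<in> {1..n} \<Longrightarrow>
      (i, j) \<in> {(u, v). u \<in> {1..n} \<and> v \<in> {1..n} \<and> 0 < wgt W u v}\<^sup>*" for i j
    using adjacency_connected by simp
qed (auto simp: wgt_nonneg wgt_sym)

lemma walk_rev: "walk W p \<Longrightarrow> walk W (rev p)"
  unfolding successively_rev by (erule successively_mono) (rule adjacent_sym)

lemma walk_in_range: "walk W p \<Longrightarrow> 2 \<le> length p \<Longrightarrow> set p \<subseteq> {1..n}"
proof (induction p rule: induct_list012)
  case (3 i j p)
  then show ?case using adjacent_in_range[of i j] by (cases p) auto
qed auto

lemma path_exists:
  assumes "r \<in> {1..n}" "k \<in> {1..n}"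
  obtains p where "is_path n W p" "hd p = r" "last p = k"
proof -
  have "(\<lambda>i j. W i j \<noteq> 0)\<^sup>*\<^sup>* r k"
    using adjacency_connected[OF assms] by (simp add: rtrancl_def)
  then obtain xs where "rtrancl_path (\<lambda>i j. W i j \<noteq> 0) r xs k"
    unfolding rtranclp_eq_rtrancl_path by blast
  then obtain xs' where xs': "rtrancl_path (\<lambda>i j. W i j \<noteq> 0) r xs' k" "distinct (r # xs')"
    by (rule rtrancl_path_distinct)
  have "set (r # xs') \<subseteq> {1..n}"
    using walk_of_rtrancl_path[OF xs'(1)] walk_in_range[of "r # xs'"] assms(1)
    by (cases xs') auto
  then show thesis
    using that[of "r # xs'"] walk_of_rtrancl_path[OF xs'(1)] xs'(2) by (simp add: is_path_iff)
qed

end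

locale coherent_network = matrix_weighted_network +
  assumes coherent: "coherent n W"
begin

lemma path_trf_simple_cycle:
  assumes walk: "walk W (q @ [hd q])" and "distinct q" "q \<noteq> []"
  shows "path_trf W (q @ [hd q]) = mat 1"
proof -
  have walk_q: "walk W q" and edge: "W (last q) (hd q) \<noteq> 0"
    using walk \<open>q \<noteq> []\<close> by (auto simp: successively_append_iff)
  have "length q \<noteq> 1"
    using edge no_loops by (cases q) auto
  then have "2 \<le> length q"
    using \<open>q \<noteq> []\<close> by (cases q) (auto simp: Suc_le_eq)
  then have "is_path n W q"
    using \<open>distinct q\<close> \<open>q \<noteq> []\<close> walk_q walk_in_range by (auto simp: is_path_iff)
  then show ?thesis
    using coherent edge \<open>2 \<le> length q\<close> unfolding coherent_def by blast
qed

lemma path_trf_closed_walk: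
  "walk W p \<Longrightarrow> p \<noteq> [] \<Longrightarrow> hd p = last p \<Longrightarrow> path_trf W p = mat 1"
proof (induction "length p" arbitrary: p rule: less_induct)
  case less
  show ?case
  proof (cases "length p \<le> 1")
    case True
    with less.prems(2) obtain x where "p = [x]"
      by (cases p) auto
    then show ?thesis by simp
  next
    case False
    define q where "q = butlast p"
    have "q \<noteq> []"
      using False by (simp add: q_def flip: length_0_conv)
    have p_last: "p = q @ [last p]"
      using less.prems(2) by (simp add: q_def)
    then have "hd q = last p"
      using less.prems(3) \<open>q \<noteq> []\<close> by (metis hd_append2)
    then have p: "p = q @ [hd q]"
      using p_last by simp
    show ?thesis
    proof (cases "distinct q")
      case True
      then show ?thesis
        using path_trf_simple_cycle \<open>q \<noteq> []\<close> less.prems(1) p by metis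
    next
      case False
      then obtain xs y ys zs where "q = xs @ [y] @ ys @ [y] @ zs"
        using not_distinct_decomp by blast
      then have p': "p = xs @ y # (ys @ y # zs @ [hd q])"
        using p by simp
      have "walk W p \<longleftrightarrow> walk W (xs @ [y]) \<and> walk W (y # ys @ y # zs @ [hd q])"
        unfolding p' by (rule successively_append_Cons_iff)
      moreover have "walk W (y # ys @ y # zs @ [hd q])
          \<longleftrightarrow> walk W (y # ys @ [y]) \<and> walk W (y # zs @ [hd q])"
        using successively_append_Cons_iff[of _ "y # ys" y "zs @ [hd q]"] by simp
      ultimately have walks:
        "walk W (xs @ [y])" "walk W (y # ys @ [y])" "walk W (y # zs @ [hd q])"
        using less.prems(1) by blast+
      have loop: "path_trf W (y # ys @ [y]) = mat 1"
        using less.hyps[of "y # ys @ [y]"] walks(2) unfolding p' by simp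
      have shortcut: "path_trf W (xs @ y # zs @ [hd q]) = mat 1"
      proof (rule less.hyps)
        show "walk W (xs @ y # zs @ [hd q])"
          using walks(1,3) successively_append_Cons_iff[of _ xs y "zs @ [hd q]"] by blast
        show "hd (xs @ y # zs @ [hd q]) = last (xs @ y # zs @ [hd q])"
          using \<open>q = xs @ [y] @ ys @ [y] @ zs\<close> by (cases xs) auto
      qed (auto simp: p')
      have "path_trf W p = path_trf W (xs @ [y]) ** path_trf W (y # ys @ y # zs @ [hd q])"
        unfolding p' by (rule path_trf_append)
      also have "\<dots> = path_trf W (xs @ [y]) ** path_trf W (y # zs @ [hd q])"
        using path_trf_append[of W "y # ys" y "zs @ [hd q]"] loop by simp
      also have "\<dots> = path_trf W (xs @ y # zs @ [hd q])"
        by (rule path_trf_append[symmetric])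
      finally show ?thesis
        using shortcut by simp
    qed
  qed
qed

lemma path_trf_cycle:
  assumes "walk W p" "walk W q" "p \<noteq> []" "q \<noteq> []" "last p = hd q" "last q = hd p"
  shows "path_trf W p ** path_trf W q = mat 1"
proof -
  obtain p' where p: "p = p' @ [hd q]"
    using assms(3,5) append_butlast_last_id by metis
  have q: "q = hd q # tl q"
    using assms(4) by simp
  have "walk W (p' @ hd q # tl q)"
    using assms(1,2) p q successively_append_Cons_iff[of _ p' "hd q" "tl q"] by simp
  moreover have "hd (p' @ hd q # tl q) = hd p"
    using p by (cases p') auto
  moreover have "last (p' @ hd q # tl q) = last q"
    using q by (metis last_appendR list.distinct(1))
  ultimately have "path_trf W (p' @ hd q # tl q) = mat 1"
    using assms(6) by (intro path_trf_closed_walk) auto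
  then show ?thesis
    using path_trf_append[of W p' "hd q" "tl q"] p q by simp
qed

lemma part_trf_path:
  assumes S: "part_trf n W lp \<sigma> S" and \<sigma>: "\<sigma> ` {1..n} = {1..lp}"
    and r: "r \<in> {1..n}" and k: "k \<in> {1..n}"
  obtains p where "walk W p" "p \<noteq> []" "hd p = r" "last p = k"
    "S (\<sigma> r) (\<sigma> k) = path_trf W p" "S (\<sigma> k) (\<sigma> r) = path_trf W (rev p)"
proof -
  obtain p where p: "is_path n W p" "hd p = r" "last p = k"
    using path_exists[OF r k] .
  have S_path: "S (\<sigma> (hd ps)) (\<sigma> (last ps)) = path_trf W ps" if "is_path n W ps" for ps
  proof -
    have "hd ps \<in> {1..n}" "last ps \<in> {1..n}"
      using that hd_in_set last_in_set unfolding is_path_iff by blast+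
    then have "\<sigma> (hd ps) \<in> {1..lp}" "\<sigma> (last ps) \<in> {1..lp}"
      using \<sigma> by blast+
    then show ?thesis
      using S that unfolding part_trf_def by (metis (no_types, lifting))
  qed
  have "is_path n W (rev p)"
    using p(1) walk_rev by (simp add: is_path_iff)
  then show thesis
    using that[of p] S_path[of p] S_path[of "rev p"] p by (auto simp: is_path_iff hd_rev last_rev)
qed

lemma part_trf_inverse:
  assumes "part_trf n W lp \<sigma> S" "\<sigma> ` {1..n} = {1..lp}" "r \<in> {1..n}" "k \<in> {1..n}"
  shows "S (\<sigma> k) (\<sigma> r) ** S (\<sigma> r) (\<sigma> k) = mat 1"
proof -
  obtain p where "walk W p" "p \<noteq> []" "hd p = r" "last p = k"
    "S (\<sigma> r) (\<sigma> k) = path_trf W p" "S (\<sigma> k) (\<sigma> r) = path_trf W (rev p)"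
    using part_trf_path[OF assms] .
  then show ?thesis
    using path_trf_cycle[of "rev p" p] walk_rev by (simp add: hd_rev last_rev)
qed

lemma part_trf_mult_trf:
  assumes S: "part_trf n W lp \<sigma> S" and \<sigma>: "\<sigma> ` {1..n} = {1..lp}"
    and r: "r \<in> {1..n}" and ij: "W i j \<noteq> 0"
  shows "S (\<sigma> r) (\<sigma> i) ** trf W i j = S (\<sigma> r) (\<sigma> j)"
proof -
  have i: "i \<in> {1..n}" and j: "j \<in> {1..n}"
    using adjacent_in_range[OF ij] by auto
  obtain p where p: "walk W p" "p \<noteq> []" "hd p = r" "last p = i"
    "S (\<sigma> r) (\<sigma> i) = path_trf W p"
    using part_trf_path[OF S \<sigma> r i] by metis
  obtain p0 where p0: "p = p0 @ [i]"
    using p(2,4) append_butlast_last_id by metis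
  obtain q where q: "walk W q" "q \<noteq> []" "hd q = r" "last q = j"
    "S (\<sigma> j) (\<sigma> r) = path_trf W (rev q)"
    using part_trf_path[OF S \<sigma> r j] by metis
  have "path_trf W (p @ [j]) = S (\<sigma> r) (\<sigma> i) ** trf W i j"
    using path_trf_snoc[of W p0 i j] p(5) p0 by simp
  moreover have "path_trf W (p @ [j]) ** path_trf W (rev q) = mat 1"
    using p q ij walk_rev by (intro path_trf_cycle) (auto simp: successively_append_iff hd_rev last_rev)
  ultimately have cycle: "(S (\<sigma> r) (\<sigma> i) ** trf W i j) ** S (\<sigma> j) (\<sigma> r) = mat 1"
    using q(5) by simp
  have "S (\<sigma> r) (\<sigma> i) ** trf W i j
      = S (\<sigma> r) (\<sigma> i) ** trf W i j ** (S (\<sigma> j) (\<sigma> r) ** S (\<sigma> r) (\<sigma> j))"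
    using part_trf_inverse[OF S \<sigma> r j] by simp
  also have "\<dots> = S (\<sigma> r) (\<sigma> j)"
    using cycle by (simp add: matrix_mul_assoc)
  finally show ?thesis .
qed

end

theorem proposition3:
  fixes n lp :: nat and W :: "nat \<Rightarrow> nat \<Rightarrow> real^'d^'d" and \<sigma> :: "nat \<Rightarrow> nat"
    and S :: "nat \<Rightarrow> nat \<Rightarrow> real^'d^'d" and y :: "real \<Rightarrow> nat \<Rightarrow> real^'d"
  assumes "mwn n W" and "coherent n W"
    and "coherent_partition n W lp \<sigma>" and "part_trf n W lp \<sigma> S"
    and "\<forall>t\<ge>0. \<forall>i\<in>{1..n}. ((\<lambda>s. y s i) has_vector_derivative
            (\<Sum>j=1..n. scaleR (wgt W i j) (trf W i j *v y t j - y t i))) (at t within {0..})"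
  shows "\<forall>j\<in>{1..n}. ((\<lambda>t. y t j) \<longlongrightarrow>
            scaleR (1 / real n) (S (\<sigma> j) 1 *v (\<Sum>i=1..n. S 1 (\<sigma> i) *v y 0 i))) at_top"
proof
  fix j assume j: "j \<in> {1..n}"
  interpret coherent_network n W
    using assms(1,2) by unfold_locales
  have \<sigma>: "\<sigma> ` {1..n} = {1..lp}"
    using assms(3) by (simp add: coherent_partition_def)
  have "\<sigma> j \<in> {1..lp}"
    using \<sigma> j by blast
  then have "1 \<in> \<sigma> ` {1..n}"
    unfolding \<sigma> by simp
  then obtain r where r: "r \<in> {1..n}" "\<sigma> r = 1"
    by (metis imageE)
  define z where "z t k = S 1 (\<sigma> k) *v y t k" for t k
  have "((\<lambda>s. z s i) has_vector_derivative consensus_field (z t) i) (at t within {0..})"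
    if "0 \<le> t" "i \<in> {1..n}" for t i
    unfolding z_def consensus_field_def
    using has_vector_derivative_gauge[OF part_trf_mult_trf[OF assms(4) \<sigma> r(1), unfolded r(2)]]
      assms(5) that by blast
  then have "((\<lambda>t. z t j) \<longlongrightarrow> average (z 0)) at_top"
    using j by (rule consensus_tendsto_average)
  then have "((\<lambda>t. S (\<sigma> j) 1 *v z t j) \<longlongrightarrow> S (\<sigma> j) 1 *v average (z 0)) at_top"
    by (rule bounded_linear.tendsto[OF matrix_vector_mul_bounded_linear])
  moreover have "average (z 0) = (1 / real n) *\<^sub>R (\<Sum>i=1..n. S 1 (\<sigma> i) *v y 0 i)"
    unfolding average_def z_def by simp
  moreover have "S (\<sigma> j) 1 *v z t j = y t j" for t
    using part_trf_inverse[OF assms(4) \<sigma> r(1) j] r(2) by (simp add: z_def matrix_vector_mul_assoc)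
  ultimately show "((\<lambda>t. y t j) \<longlongrightarrow>
      (1 / real n) *\<^sub>R (S (\<sigma> j) 1 *v (\<Sum>i=1..n. S 1 (\<sigma> i) *v y 0 i))) at_top"
    by (simp add: matrix_vector_mult_scaleR)
qed

end
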